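(* Fix a constant $\alpha\in(0,1)$. There are constants $\kappa_0\ge1$, $c_\alpha>0$ and $\epsilon_\alpha>0$ (depending only on $\alpha$) such that for every $\epsilon\in(0,\epsilon_\alpha)$, any quantum query algorithm which, given unitaries $\mathcal O_\rho,\mathcal O_\sigma$ preparing purifications of arbitrary mixed states $\rho,\sigma$ with $\rho\ge I/\kappa_0$ and $\sigma\ge I/\kappa_0$, outputs an estimate of $\widehat F_\alpha(\rho,\sigma)$ within additive error $\epsilon$ with probability at least $2/3$, must make at least $c_\alpha/\epsilon$ queries on some such input. That is, estimating $\widehat F_\alpha$ requires $\Omega(1/\epsilon)$ queries even when $\kappa_\rho=\kappa_\sigma=\Theta(1)$.
   Context: For positive definite $X,Z$ and real $t$, $X\#_tZ:=X^{1/2}(X^{-1/2}ZX^{-1/2})^tX^{1/2}$, and $\widehat F_\alpha(\rho,\sigma):=\operatorname{Tr}(\sigma\#_\alpha\rho)$. A unitary $\mathcal O_\rho$ on $n+a$ qubits prepares a purification of $\rho$ if $\operatorname{Tr}_a(\mathcal O_\rho|0\rangle\langle0|\mathcal O_\rho^\dagger)=\rho$. A query means one use of any of $\mathcal O$, $\mathcal O^\dagger$, controlled-$\mathcal O$, controlled-$\mathcal O^\dagger$. *)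

theory Defs
  imports Complex_Main "Jordan_Normal_Form.Matrix"
begin

definition cadj :: "complex mat \<Rightarrow> complex mat" where
  "cadj A = mat (dim_col A) (dim_row A) (\<lambda>(i,j). cnj (A $$ (j,i)))"

definition cunitary :: "nat \<Rightarrow> complex mat \<Rightarrow> bool" where
  "cunitary d U \<longleftrightarrow> U \<in> carrier_mat d d \<and> cadj U * U = 1\<^sub>m d \<and> U * cadj U = 1\<^sub>m d"

definition ctrace :: "complex mat \<Rightarrow> complex" where
  "ctrace A = (\<Sum>i<dim_row A. A $$ (i,i))"

definition cpsd :: "nat \<Rightarrow> complex mat \<Rightarrow> bool" where
  "cpsd d A \<longleftrightarrow> A \<in> carrier_mat d d \<and> cadj A = A \<and>
     (\<forall>v :: nat \<Rightarrow> complex. Re (\<Sum>i<d. \<Sum>j<d. cnj (v i) * A $$ (i,j) * v j) \<ge> 0)"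

definition loewner_ge :: "nat \<Rightarrow> complex mat \<Rightarrow> complex mat \<Rightarrow> bool" where
  "loewner_ge d A B \<longleftrightarrow> A \<in> carrier_mat d d \<and> B \<in> carrier_mat d d \<and> cpsd d (A - B)"

definition cdiag :: "nat \<Rightarrow> (nat \<Rightarrow> real) \<Rightarrow> complex mat" where
  "cdiag d f = mat d d (\<lambda>(i,j). if i = j then complex_of_real (f i) else 0)"

definition mat_powr :: "nat \<Rightarrow> complex mat \<Rightarrow> real \<Rightarrow> complex mat" where
  "mat_powr d A t = (THE B. \<exists>U lam. cunitary d U \<and> (\<forall>i<d. lam i > 0) \<and>
       A = U * cdiag d lam * cadj U \<and> B = U * cdiag d (\<lambda>i. lam i powr t) * cadj U)"

definition mat_geo :: "nat \<Rightarrow> complex mat \<Rightarrow> real \<Rightarrow> complex mat \<Rightarrow> complex mat" where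
  "mat_geo d X t Z = mat_powr d X (1/2) *
      mat_powr d (mat_powr d X (-1/2) * Z * mat_powr d X (-1/2)) t * mat_powr d X (1/2)"

text \<open>\<open>\<widehat>F_\<alpha>(\<rho>,\<sigma>) = Tr(\<sigma> #_\<alpha> \<rho>)\<close> (real-valued for positive definite inputs; we take the real part).\<close>
definition Fhat :: "nat \<Rightarrow> real \<Rightarrow> complex mat \<Rightarrow> complex mat \<Rightarrow> real" where
  "Fhat d \<alpha> \<rho> \<sigma> = Re (ctrace (mat_geo d \<sigma> \<alpha> \<rho>))"

text \<open>Basis index of the \<open>(n+a)\<close>-qubit space: \<open>i * 2^a + k\<close> with \<open>i\<close> the system (first \<open>n\<close> qubits)
  and \<open>k\<close> the ancilla (last \<open>a\<close> qubits). \<open>O|0\<rangle>\<close> is the 0-th column of \<open>O\<close>.\<close>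
definition ptrace_anc_prep :: "nat \<Rightarrow> nat \<Rightarrow> complex mat \<Rightarrow> complex mat" where
  "ptrace_anc_prep n a Op = mat (2^n) (2^n) (\<lambda>(i,j).
      \<Sum>k<2^a. Op $$ (i * 2^a + k, 0) * cnj (Op $$ (j * 2^a + k, 0)))"

definition prepares_purification :: "nat \<Rightarrow> nat \<Rightarrow> complex mat \<Rightarrow> complex mat \<Rightarrow> bool" where
  "prepares_purification n a Op \<rho> \<longleftrightarrow> cunitary (2^(n+a)) Op \<and> ptrace_anc_prep n a Op = \<rho>"

text \<open>The algorithm acts on a register of dimension \<open>2 * N * W\<close>, \<open>N = 2^(n+a)\<close>, \<open>W = 2^w\<close>:
  a control qubit \<open>c\<close>, the oracle register \<open>x < N\<close> and a workspace \<open>k < W\<close>, with basis index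
  \<open>c * (N*W) + x * W + k\<close>.  Arbitrary unitaries between queries make the fixed placement of
  the oracle register without loss of generality.\<close>
definition qdim :: "nat \<Rightarrow> nat \<Rightarrow> nat" where
  "qdim N W = 2 * N * W"

definition ext_op :: "nat \<Rightarrow> nat \<Rightarrow> complex mat \<Rightarrow> complex mat" where
  "ext_op N W Op = mat (qdim N W) (qdim N W) (\<lambda>(r,s).
     let c = r div (N*W); x = (r mod (N*W)) div W; k = r mod W;
         c' = s div (N*W); x' = (s mod (N*W)) div W; k' = s mod W in
     if c = c' \<and> k = k' then Op $$ (x,x') else 0)"

definition ctrl_op :: "nat \<Rightarrow> nat \<Rightarrow> complex mat \<Rightarrow> complex mat" where
  "ctrl_op N W Op = mat (qdim N W) (qdim N W) (\<lambda>(r,s).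
     let c = r div (N*W); x = (r mod (N*W)) div W; k = r mod W;
         c' = s div (N*W); x' = (s mod (N*W)) div W; k' = s mod W in
     if c = c' \<and> k = k' then (if c = 0 then (if x = x' then 1 else 0) else Op $$ (x,x')) else 0)"

definition query_op :: "nat \<Rightarrow> nat \<Rightarrow> nat \<Rightarrow> complex mat \<Rightarrow> complex mat" where
  "query_op N W q Op =
     (if q = 0 then ext_op N W Op else if q = 1 then ext_op N W (cadj Op)
      else if q = 2 then ctrl_op N W Op else ctrl_op N W (cadj Op))"

fun circuit :: "nat \<Rightarrow> nat \<Rightarrow> (nat \<Rightarrow> complex mat) \<Rightarrow> (nat \<Rightarrow> bool) \<Rightarrow> (nat \<Rightarrow> nat)
      \<Rightarrow> complex mat \<Rightarrow> complex mat \<Rightarrow> nat \<Rightarrow> complex mat" where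
  "circuit N W U sel kind O1 O2 0 = U 0"
| "circuit N W U sel kind O1 O2 (Suc t) =
     U (Suc t) * query_op N W (kind t) (if sel t then O1 else O2) * circuit N W U sel kind O1 O2 t"

definition success_prob :: "nat \<Rightarrow> complex mat \<Rightarrow> (nat \<Rightarrow> real) \<Rightarrow> real \<Rightarrow> real \<Rightarrow> real" where
  "success_prob D C est v \<epsilon> = (\<Sum>j\<in>{j. j < D \<and> \<bar>est j - v\<bar> \<le> \<epsilon>}. (cmod (C $$ (j,0)))^2)"

end

theory Submission
  imports Defs "HOL-Analysis.L2_Norm"
begin

text \<open>
  Take one system and one ancilla qubit, \<open>\<kappa>\<^sub>0 = 4\<close>, \<open>\<sigma> = I/2\<close> and \<open>\<rho>\<^sub>p = diag(p, 1 - p)\<close>.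
  The real rotation \<open>rot (\<surd>p) (\<surd>(1 - p))\<close> purifies \<open>\<rho>\<^sub>p\<close>, and
  \<open>F\<^sub>\<alpha>(\<rho>\<^sub>p, I/2) = 2\<^sup>\<alpha>\<^sup>-\<^sup>1 (p\<^sup>\<alpha> + (1 - p)\<^sup>\<alpha>)\<close> has slope at least some \<open>L\<^sub>\<alpha> > 0\<close> on \<open>[1/4, 1/3]\<close>.
  An estimator with additive error \<open>\<epsilon>\<close> therefore separates \<open>p = 1/4\<close> from \<open>q = p + 3\<epsilon>/L\<^sub>\<alpha>\<close>,
  so its final states on the two inputs are at distance at least \<open>1/5\<close>. By the hybrid argument
  each query moves that distance by at most the distance between the two oracles, which is
  at most \<open>2 (q - p)\<close>; hence \<open>T \<ge> L\<^sub>\<alpha> / (30 \<epsilon>)\<close>.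
\<close>

lemma sum_lessThan_mult_nat:
  fixes f :: "nat \<Rightarrow> 'b::comm_monoid_add"
  shows "(\<Sum>r<A * B. f r) = (\<Sum>i<A. \<Sum>j<B. f (i * B + j))"
proof -
  have "(\<Sum>r<A * B. f r) = (\<Sum>i<A. \<Sum>r\<in>{i * B..<i * B + B}. f r)"
    by (rule sum.nat_group[symmetric])
  also have "\<dots> = (\<Sum>i<A. \<Sum>j<B. f (i * B + j))"
  proof (rule sum.cong[OF refl])
    fix i
    show "(\<Sum>r\<in>{i * B..<i * B + B}. f r) = (\<Sum>j<B. f (i * B + j))"
      using sum.shift_bounds_nat_ivl[of f 0 "i * B" B] by (simp add: atLeast0LessThan add.commute)
  qed
  finally show ?thesis .
qed

lemma reg_offset_less:
  assumes "x < N" "k < (W::nat)"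
  shows "x * W + k < N * W"
proof -
  have "x * W + k < (x + 1) * W" using assms(2) by simp
  also have "\<dots> \<le> N * W" using assms(1) by (intro mult_right_mono) auto
  finally show ?thesis .
qed

lemma reg_index_less:
  assumes "c < 2" "x < N" "k < (W::nat)"
  shows "c * (N * W) + x * W + k < qdim N W"
proof -
  have "c * (N * W) + x * W + k < (c + 1) * (N * W)"
    using reg_offset_less[OF assms(2,3)] by simp
  also have "\<dots> \<le> 2 * (N * W)" using assms(1) by (intro mult_right_mono) auto
  finally show ?thesis by (simp add: qdim_def mult.assoc)
qed

lemma reg_index_split:
  assumes "x < N" "k < (W::nat)"
  shows "(c * (N * W) + x * W + k) div (N * W) = c"
    and "((c * (N * W) + x * W + k) mod (N * W)) div W = x"
    and "(c * (N * W) + x * W + k) mod W = k"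
proof -
  have xk: "x * W + k < N * W" using assms by (rule reg_offset_less)
  show "(c * (N * W) + x * W + k) div (N * W) = c"
    using assms xk div_mult_self1[of "N * W" "x * W + k" c] by (simp add: add.assoc add.commute)
  show "((c * (N * W) + x * W + k) mod (N * W)) div W = x"
    using xk assms by (simp add: add.assoc)
  show "(c * (N * W) + x * W + k) mod W = k"
    using assms by (simp add: add.assoc mult.assoc[symmetric])
qed

lemma reg_index_cases:
  assumes "r < qdim N W"
  obtains c x k where "c < 2" "x < N" "k < W" "r = c * (N * W) + x * W + k"
proof
  have "qdim N W \<noteq> 0" using assms by auto
  then have NW: "0 < N * W" by (simp add: qdim_def)
  show "r div (N * W) < 2" using assms by (simp add: qdim_def less_mult_imp_div_less mult.assoc)
  show "r mod (N * W) div W < N" using NW by (simp add: div_less_iff_less_mult)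
  show "r mod W < W" using NW by simp
  have "r mod (N * W) = r mod (N * W) div W * W + r mod W"
    by (metis div_mult_mod_eq mod_mod_cancel dvd_triv_right mult.commute)
  then show "r = r div (N * W) * (N * W) + r mod (N * W) div W * W + r mod W"
    by (metis add.assoc div_mult_mod_eq)
qed

lemma reg_index_eq_iff:
  assumes "x < N" "k < W" "x' < N" "k' < (W::nat)"
  shows "c * (N * W) + x * W + k = c' * (N * W) + x' * W + k' \<longleftrightarrow> c = c' \<and> x = x' \<and> k = k'"
  using reg_index_split[OF assms(1,2), of c] reg_index_split[OF assms(3,4), of c'] by metis

lemma sum_qdim:
  fixes f :: "nat \<Rightarrow> 'b::comm_monoid_add"
  shows "(\<Sum>r<qdim N W. f r) = (\<Sum>c<2. \<Sum>x<N. \<Sum>k<W. f (c * (N * W) + x * W + k))"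
  unfolding qdim_def mult.assoc sum_lessThan_mult_nat by (simp add: add.assoc)

lemma index_mult_sum:
  assumes "i < dim_row A" "j < dim_col B" "dim_col A = dim_row B"
  shows "(A * B) $$ (i, j) = (\<Sum>k<dim_col A. A $$ (i, k) * B $$ (k, j))"
  using assms by (simp add: scalar_prod_def atLeast0LessThan)

lemma cadj_carrier [simp]: "A \<in> carrier_mat n m \<Longrightarrow> cadj A \<in> carrier_mat m n"
  and cadj_dim [simp]: "dim_row (cadj A) = dim_col A" "dim_col (cadj A) = dim_row A"
  and cadj_index [simp]: "i < dim_col A \<Longrightarrow> j < dim_row A \<Longrightarrow> cadj A $$ (i, j) = cnj (A $$ (j, i))"
  unfolding cadj_def carrier_mat_def by auto

lemma cadj_cadj [simp]: "cadj (cadj A) = A"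
  by (rule eq_matI) auto

lemma cadj_one [simp]: "cadj (1\<^sub>m n) = 1\<^sub>m n"
  by (rule eq_matI) auto

lemma cadj_mult:
  assumes "A \<in> carrier_mat n m" "B \<in> carrier_mat m p"
  shows "cadj (A * B) = cadj B * cadj A"
  by (rule eq_matI) (use assms in \<open>auto simp: scalar_prod_def mult.commute\<close>)

lemma cunitary_cadj: "cunitary d U \<Longrightarrow> cunitary d (cadj U)"
  unfolding cunitary_def by auto

lemma cunitary_one: "cunitary d (1\<^sub>m d)"
  unfolding cunitary_def by simp

lemma cunitary_mult:
  assumes "cunitary d A" "cunitary d B"
  shows "cunitary d (A * B)"
proof -
  have c: "A \<in> carrier_mat d d" "B \<in> carrier_mat d d" "cadj A \<in> carrier_mat d d" "cadj B \<in> carrier_mat d d"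
    using assms unfolding cunitary_def by auto
  have "cadj (A * B) * (A * B) = cadj B * cadj A * (A * B)"
    using c by (simp add: cadj_mult[of A d d B d])
  also have "\<dots> = cadj B * (cadj A * (A * B))"
    using c by (intro assoc_mult_mat) auto
  also have "\<dots> = cadj B * (cadj A * A * B)"
    using c by (subst assoc_mult_mat[of "cadj A" d d A d B d]) auto
  also have "\<dots> = 1\<^sub>m d"
    using assms c by (simp add: cunitary_def)
  finally have left: "cadj (A * B) * (A * B) = 1\<^sub>m d" .
  have "A * B * cadj (A * B) = A * B * (cadj B * cadj A)"
    using c by (simp add: cadj_mult[of A d d B d])
  also have "\<dots> = A * (B * (cadj B * cadj A))"
    using c by (intro assoc_mult_mat) auto
  also have "\<dots> = A * (B * cadj B * cadj A)"
    using c by (subst assoc_mult_mat[of B d d "cadj B" d "cadj A" d]) auto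
  also have "\<dots> = 1\<^sub>m d"
    using assms c by (simp add: cunitary_def)
  finally have right: "A * B * cadj (A * B) = 1\<^sub>m d" .
  show ?thesis
    using c left right unfolding cunitary_def by simp
qed

lemma cdiag_carrier [simp]: "cdiag d f \<in> carrier_mat d d"
  and cdiag_dim [simp]: "dim_row (cdiag d f) = d" "dim_col (cdiag d f) = d"
  and cdiag_index [simp]: "i < d \<Longrightarrow> j < d \<Longrightarrow> cdiag d f $$ (i, j) = (if i = j then of_real (f i) else 0)"
  unfolding cdiag_def by auto

lemma cdiag_one: "cdiag d (\<lambda>_. 1) = 1\<^sub>m d"
  by (rule eq_matI) auto

lemma cadj_cdiag [simp]: "cadj (cdiag d f) = cdiag d f"
  by (rule eq_matI) auto

lemma cdiag_mult_index:
  assumes "A \<in> carrier_mat d n" "i < d" "j < n"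
  shows "(cdiag d f * A) $$ (i, j) = of_real (f i) * A $$ (i, j)"
  using assms by (subst index_mult_sum) (simp_all add: if_distrib[where f="\<lambda>x. x * _"] sum.delta' cong: if_cong)

lemma mult_cdiag_index:
  assumes "A \<in> carrier_mat n d" "i < n" "j < d"
  shows "(A * cdiag d f) $$ (i, j) = A $$ (i, j) * of_real (f j)"
  using assms by (subst index_mult_sum) (simp_all add: if_distrib[where f="\<lambda>x. _ * x"] sum.delta cong: if_cong)

lemma cdiag_mult: "cdiag d f * cdiag d g = cdiag d (\<lambda>i. f i * g i)"
  by (rule eq_matI) (subst mult_cdiag_index[of _ d d], simp_all)

lemma ctrace_cdiag: "ctrace (cdiag d f) = of_real (\<Sum>i<d. f i)"
  unfolding ctrace_def by simp

lemma cdiag_cong: "(\<And>i. i < d \<Longrightarrow> f i = g i) \<Longrightarrow> cdiag d f = cdiag d g"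
  by (rule eq_matI) auto

lemma cpsd_cdiag:
  assumes "\<forall>i<d. 0 \<le> w i"
  shows "cpsd d (cdiag d w)"
  unfolding cpsd_def
proof (intro conjI allI)
  fix v :: "nat \<Rightarrow> complex"
  have "(\<Sum>j<d. cnj (v i) * cdiag d w $$ (i, j) * v j) = of_real (w i * (cmod (v i))\<^sup>2)"
    if "i < d" for i
  proof -
    have "(\<Sum>j<d. cnj (v i) * cdiag d w $$ (i, j) * v j) =
        (\<Sum>j<d. if j = i then of_real (w i) * (v i * cnj (v i)) else 0)"
      using that by (intro sum.cong) auto
    then show ?thesis using that by (simp add: complex_norm_square[symmetric])
  qed
  then have "(\<Sum>i<d. \<Sum>j<d. cnj (v i) * cdiag d w $$ (i, j) * v j) = (\<Sum>i<d. of_real (w i * (cmod (v i))\<^sup>2))"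
    by (intro sum.cong) auto
  then show "0 \<le> Re (\<Sum>i<d. \<Sum>j<d. cnj (v i) * cdiag d w $$ (i, j) * v j)"
    using assms by (auto intro!: sum_nonneg)
qed simp_all

lemma loewner_ge_cdiag:
  assumes "\<forall>i<d. c \<le> r i"
  shows "loewner_ge d (cdiag d r) (of_real c \<cdot>\<^sub>m 1\<^sub>m d)"
proof -
  have "cdiag d r - of_real c \<cdot>\<^sub>m 1\<^sub>m d = cdiag d (\<lambda>i. r i - c)"
    by (rule eq_matI) auto
  then show ?thesis
    using assms unfolding loewner_ge_def by (simp add: cpsd_cdiag)
qed

text \<open>Every query operator acts as \<open>A\<^sub>0\<close> or \<open>A\<^sub>1\<close> on the oracle register depending on the
  control qubit, and this block form is closed under products, adjoints and differences.\<close>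

definition ctrl_pair :: "nat \<Rightarrow> nat \<Rightarrow> complex mat \<Rightarrow> complex mat \<Rightarrow> complex mat" where
  "ctrl_pair N W A0 A1 = mat (qdim N W) (qdim N W) (\<lambda>(r, s).
     let c = r div (N*W); x = (r mod (N*W)) div W; k = r mod W;
         c' = s div (N*W); x' = (s mod (N*W)) div W; k' = s mod W in
     if c = c' \<and> k = k' then (if c = 0 then A0 else A1) $$ (x, x') else 0)"

lemma ctrl_pair_carrier [simp]: "ctrl_pair N W A0 A1 \<in> carrier_mat (qdim N W) (qdim N W)"
  and ctrl_pair_dim [simp]: "dim_row (ctrl_pair N W A0 A1) = qdim N W" "dim_col (ctrl_pair N W A0 A1) = qdim N W"
  by (simp_all add: ctrl_pair_def)

lemma ctrl_pair_index:
  assumes "c < 2" "x < N" "k < W" "c' < 2" "x' < N" "k' < W"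
  shows "ctrl_pair N W A0 A1 $$ (c * (N * W) + x * W + k, c' * (N * W) + x' * W + k') =
     (if c = c' \<and> k = k' then (if c = 0 then A0 else A1) $$ (x, x') else 0)"
  using assms reg_index_less[of c x N k W] reg_index_less[of c' x' N k' W]
  unfolding ctrl_pair_def by (simp add: reg_index_split Let_def)

lemma reg_mat_eqI:
  assumes "A \<in> carrier_mat (qdim N W) (qdim N W)" "B \<in> carrier_mat (qdim N W) (qdim N W)"
    and "\<And>c x k c' x' k'. c < 2 \<Longrightarrow> x < N \<Longrightarrow> k < W \<Longrightarrow> c' < 2 \<Longrightarrow> x' < N \<Longrightarrow> k' < W \<Longrightarrow>
      A $$ (c * (N * W) + x * W + k, c' * (N * W) + x' * W + k') =
      B $$ (c * (N * W) + x * W + k, c' * (N * W) + x' * W + k')"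
  shows "A = B"
proof (rule eq_matI)
  fix i j assume "i < dim_row B" "j < dim_col B"
  with assms(2) obtain c x k c' x' k' where "c < 2" "x < N" "k < W" "i = c * (N * W) + x * W + k"
    and "c' < 2" "x' < N" "k' < W" "j = c' * (N * W) + x' * W + k'"
    by (metis carrier_matD reg_index_cases)
  then show "A $$ (i, j) = B $$ (i, j)" using assms(3) by blast
qed (use assms in auto)

lemma ext_op_ctrl_pair: "ext_op N W Op = ctrl_pair N W Op Op"
  by (rule eq_matI) (auto simp: ext_op_def ctrl_pair_def Let_def)

lemma ctrl_op_ctrl_pair: "ctrl_op N W Op = ctrl_pair N W (1\<^sub>m N) Op"
proof (rule eq_matI)
  fix r s assume "r < dim_row (ctrl_pair N W (1\<^sub>m N) Op)" "s < dim_col (ctrl_pair N W (1\<^sub>m N) Op)"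
  then obtain c x k c' x' k' where idx: "c < 2" "x < N" "k < W" "c' < 2" "x' < N" "k' < W"
    and rs: "r = c * (N * W) + x * W + k" "s = c' * (N * W) + x' * W + k'"
    by (metis ctrl_pair_dim reg_index_cases)
  have "ctrl_op N W Op $$ (r, s) =
      (if c = c' \<and> k = k' then (if c = 0 then (if x = x' then 1 else 0) else Op $$ (x, x')) else 0)"
    unfolding ctrl_op_def rs using idx
    by (subst index_mat) (simp_all only: reg_index_less case_prod_conv Let_def reg_index_split)
  then show "ctrl_op N W Op $$ (r, s) = ctrl_pair N W (1\<^sub>m N) Op $$ (r, s)"
    using idx by (simp add: rs ctrl_pair_index)
qed (simp_all add: ctrl_op_def)

lemma ctrl_pair_minus:
  assumes "A0 \<in> carrier_mat N N" "A1 \<in> carrier_mat N N" "B0 \<in> carrier_mat N N" "B1 \<in> carrier_mat N N"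
  shows "ctrl_pair N W A0 A1 - ctrl_pair N W B0 B1 = ctrl_pair N W (A0 - B0) (A1 - B1)"
  by (rule reg_mat_eqI[of _ N W]) (use assms in \<open>auto simp: ctrl_pair_index reg_index_less\<close>)

lemma ctrl_pair_cadj:
  assumes "A0 \<in> carrier_mat N N" "A1 \<in> carrier_mat N N"
  shows "cadj (ctrl_pair N W A0 A1) = ctrl_pair N W (cadj A0) (cadj A1)"
  by (rule reg_mat_eqI[of _ N W]) (use assms in \<open>auto simp: ctrl_pair_index reg_index_less\<close>)

lemma ctrl_pair_mult:
  assumes "A0 \<in> carrier_mat N N" "A1 \<in> carrier_mat N N" "B0 \<in> carrier_mat N N" "B1 \<in> carrier_mat N N"
  shows "ctrl_pair N W A0 A1 * ctrl_pair N W B0 B1 = ctrl_pair N W (A0 * B0) (A1 * B1)"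
proof (rule reg_mat_eqI[of _ N W])
  fix c x k c' x' k' :: nat
  assume idx: "c < 2" "x < N" "k < W" "c' < 2" "x' < N" "k' < W"
  define A where "A = (if c = 0 then A0 else A1)"
  define B where "B = (if c = 0 then B0 else B1)"
  let ?r = "c * (N * W) + x * W + k" and ?s = "c' * (N * W) + x' * W + k'"
  have "(ctrl_pair N W A0 A1 * ctrl_pair N W B0 B1) $$ (?r, ?s)
      = (\<Sum>r<qdim N W. ctrl_pair N W A0 A1 $$ (?r, r) * ctrl_pair N W B0 B1 $$ (r, ?s))"
    using idx by (subst index_mult_sum) (auto simp: reg_index_less)
  also have "\<dots> = (\<Sum>c''<2. \<Sum>x''<N. \<Sum>k''<W. if c'' = c \<and> k'' = k then
           A $$ (x, x'') * (if c = c' \<and> k = k' then B $$ (x'', x') else 0) else 0)"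
    unfolding sum_qdim using idx by (intro sum.cong refl) (auto simp: ctrl_pair_index A_def B_def)
  also have "\<dots> = (\<Sum>c''<2. if c'' = c then
           (\<Sum>x''<N. A $$ (x, x'') * (if c = c' \<and> k = k' then B $$ (x'', x') else 0)) else 0)"
    using idx(3) by (intro sum.cong refl) (simp add: sum.delta)
  also have "\<dots> = (if c = c' \<and> k = k' then (A * B) $$ (x, x') else 0)"
    using idx assms by (subst index_mult_sum) (auto simp: sum.delta A_def B_def)
  finally show "(ctrl_pair N W A0 A1 * ctrl_pair N W B0 B1) $$ (?r, ?s)
      = ctrl_pair N W (A0 * B0) (A1 * B1) $$ (?r, ?s)"
    using idx by (simp add: ctrl_pair_index A_def B_def)
qed (auto intro!: mult_carrier_mat[of _ "qdim N W" "qdim N W"])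

lemma ctrl_pair_scalar:
  "ctrl_pair N W (of_real m0 \<cdot>\<^sub>m 1\<^sub>m N) (of_real m1 \<cdot>\<^sub>m 1\<^sub>m N) =
     cdiag (qdim N W) (\<lambda>r. if r div (N * W) = 0 then m0 else m1)"
  by (rule reg_mat_eqI[of _ N W])
    (auto simp: ctrl_pair_index reg_index_less reg_index_split reg_index_eq_iff)

lemma ctrl_pair_one: "ctrl_pair N W (1\<^sub>m N) (1\<^sub>m N) = 1\<^sub>m (qdim N W)"
  by (rule reg_mat_eqI[of _ N W]) (auto simp: ctrl_pair_index reg_index_less reg_index_eq_iff)

lemma ctrl_pair_unitary:
  assumes "cunitary N A0" "cunitary N A1"
  shows "cunitary (qdim N W) (ctrl_pair N W A0 A1)"
  using assms unfolding cunitary_def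
  by (simp add: ctrl_pair_cadj ctrl_pair_mult ctrl_pair_one)

lemma query_op_unitary: "cunitary N Op \<Longrightarrow> cunitary (qdim N W) (query_op N W q Op)"
  unfolding query_op_def ext_op_ctrl_pair ctrl_op_ctrl_pair
  by (simp add: ctrl_pair_unitary cunitary_cadj cunitary_one)

lemma circuit_unitary:
  assumes "\<forall>t\<le>T. cunitary (qdim N W) (U t)" "cunitary N O\<^sub>\<rho>" "cunitary N O\<^sub>\<sigma>" "t \<le> T"
  shows "cunitary (qdim N W) (circuit N W U sel kind O\<^sub>\<rho> O\<^sub>\<sigma> t)"
  using assms(4)
proof (induction t)
  case (Suc t)
  then show ?case
    using assms by (simp add: cunitary_mult query_op_unitary)
qed (use assms in simp)

section \<open>The hybrid argument\<close>

definition col0_norm :: "nat \<Rightarrow> complex mat \<Rightarrow> real" where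
  "col0_norm D X = L2_set (\<lambda>j. cmod (X $$ (j, 0))) {..<D}"

lemma col0_norm_nonneg [simp]: "0 \<le> col0_norm D X"
  by (simp add: col0_norm_def)

lemma col0_norm_sq: "(col0_norm D X)\<^sup>2 = (\<Sum>j<D. (cmod (X $$ (j, 0)))\<^sup>2)"
  by (simp add: col0_norm_def L2_set_def sum_nonneg)

lemma cadj_cdiag_sandwich_00:
  assumes "X \<in> carrier_mat D n" "0 < n"
  shows "(cadj X * cdiag D d * X) $$ (0, 0) = of_real (\<Sum>j<D. d j * (cmod (X $$ (j, 0)))\<^sup>2)"
proof -
  have "(cadj X * cdiag D d * X) $$ (0, 0) = (\<Sum>j<D. (cadj X * cdiag D d) $$ (0, j) * X $$ (j, 0))"
    using assms by (subst index_mult_sum) auto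
  also have "\<dots> = (\<Sum>j<D. of_real (d j * (cmod (X $$ (j, 0)))\<^sup>2))"
  proof (rule sum.cong[OF refl])
    fix j assume "j \<in> {..<D}"
    then have "(cadj X * cdiag D d) $$ (0, j) = cnj (X $$ (j, 0)) * of_real (d j)"
      using assms by (subst mult_cdiag_index[of _ n D]) auto
    then show "(cadj X * cdiag D d) $$ (0, j) * X $$ (j, 0) = of_real (d j * (cmod (X $$ (j, 0)))\<^sup>2)"
      by (simp add: complex_norm_square[symmetric] mult.commute mult.left_commute)
  qed
  finally show ?thesis by simp
qed

lemma col0_norm_gram:
  assumes "A \<in> carrier_mat D D" "X \<in> carrier_mat D D" "0 < D" "cadj A * A = cdiag D d"
  shows "(col0_norm D (A * X))\<^sup>2 = (\<Sum>j<D. d j * (cmod (X $$ (j, 0)))\<^sup>2)"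
proof -
  have c: "cadj A \<in> carrier_mat D D" "cadj X \<in> carrier_mat D D" using assms by auto
  have "cadj (A * X) * (A * X) = cadj X * cadj A * (A * X)"
    using assms by (simp add: cadj_mult[of A D D X D])
  also have "\<dots> = cadj X * (cadj A * A * X)"
    using assms(1,2) c by (simp add: assoc_mult_mat[of _ D D _ D _ D])
  also have "\<dots> = cadj X * cdiag D d * X"
    unfolding assms(4)[symmetric] using assms(1,2) c
    by (simp add: assoc_mult_mat[of _ D D _ D _ D] mult_carrier_mat[of _ D D _ D])
  finally have gram: "cadj (A * X) * (A * X) = cadj X * cdiag D d * X" .
  have "of_real ((col0_norm D (A * X))\<^sup>2) = (cadj (A * X) * cdiag D (\<lambda>_. 1) * (A * X)) $$ (0, 0)"
    using assms cadj_cdiag_sandwich_00[of "A * X" D D "\<lambda>_. 1"]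
    by (simp add: col0_norm_def L2_set_def sum_nonneg)
  also have "cadj (A * X) * cdiag D (\<lambda>_. 1) * (A * X) = cadj X * cdiag D d * X"
    using assms by (simp add: cdiag_one gram)
  also have "\<dots> $$ (0, 0) = of_real (\<Sum>j<D. d j * (cmod (X $$ (j, 0)))\<^sup>2)"
    using assms by (intro cadj_cdiag_sandwich_00) auto
  finally show ?thesis by (simp only: of_real_eq_iff)
qed

lemma col0_norm_mult_le:
  assumes "A \<in> carrier_mat D D" "X \<in> carrier_mat D D" "0 < D" "cadj A * A = cdiag D d"
    and "\<And>j. j < D \<Longrightarrow> d j \<le> \<delta>\<^sup>2" "0 \<le> \<delta>"
  shows "col0_norm D (A * X) \<le> \<delta> * col0_norm D X"
proof (rule power2_le_imp_le)
  have "(col0_norm D (A * X))\<^sup>2 \<le> (\<Sum>j<D. \<delta>\<^sup>2 * (cmod (X $$ (j, 0)))\<^sup>2)"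
    unfolding col0_norm_gram[OF assms(1-4)] using assms(5) by (intro sum_mono mult_right_mono) auto
  also have "\<dots> = (\<delta> * col0_norm D X)\<^sup>2"
    by (simp only: power_mult_distrib col0_norm_sq sum_distrib_left)
  finally show "(col0_norm D (A * X))\<^sup>2 \<le> (\<delta> * col0_norm D X)\<^sup>2" .
  show "0 \<le> \<delta> * col0_norm D X" using assms(6) by simp
qed

lemma col0_norm_unitary:
  assumes "cunitary D A" "X \<in> carrier_mat D D" "0 < D"
  shows "col0_norm D (A * X) = col0_norm D X"
proof -
  have "(col0_norm D (A * X))\<^sup>2 = (col0_norm D X)\<^sup>2"
    using assms col0_norm_gram[of A D X "\<lambda>_. 1"] by (simp add: cunitary_def cdiag_one col0_norm_sq)
  then show ?thesis by (simp add: power2_eq_iff_nonneg)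
qed

lemma col0_norm_add_le:
  assumes "X \<in> carrier_mat D n" "Y \<in> carrier_mat D n" "0 < n"
  shows "col0_norm D (X + Y) \<le> col0_norm D X + col0_norm D Y"
proof -
  have "col0_norm D (X + Y) \<le> L2_set (\<lambda>j. cmod (X $$ (j, 0)) + cmod (Y $$ (j, 0))) {..<D}"
    unfolding col0_norm_def using assms by (intro L2_set_mono) (auto intro: norm_triangle_ineq)
  also have "\<dots> \<le> col0_norm D X + col0_norm D Y"
    unfolding col0_norm_def by (rule L2_set_triangle_ineq)
  finally show ?thesis .
qed

lemma col0_norm_one:
  assumes "0 < D"
  shows "col0_norm D (1\<^sub>m D) = 1"
proof -
  have "(\<Sum>i<D. (cmod (1\<^sub>m D $$ (i, 0)))\<^sup>2) = (\<Sum>i<D. if i = 0 then 1 else 0)"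
    by (intro sum.cong) auto
  then show ?thesis using assms by (simp add: col0_norm_def L2_set_def)
qed

lemma col0_norm_circuit:
  assumes "\<forall>t\<le>T. cunitary (qdim N W) (U t)" "cunitary N O\<^sub>\<rho>" "cunitary N O\<^sub>\<sigma>" "t \<le> T" "0 < qdim N W"
  shows "col0_norm (qdim N W) (circuit N W U sel kind O\<^sub>\<rho> O\<^sub>\<sigma> t) = 1"
proof -
  have C: "cunitary (qdim N W) (circuit N W U sel kind O\<^sub>\<rho> O\<^sub>\<sigma> t)"
    using assms(1-4) by (rule circuit_unitary)
  then have "circuit N W U sel kind O\<^sub>\<rho> O\<^sub>\<sigma> t \<in> carrier_mat (qdim N W) (qdim N W)"
    by (simp add: cunitary_def)
  then show ?thesis
    using col0_norm_unitary[OF C one_carrier_mat assms(5)] col0_norm_one[OF assms(5)] by simp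
qed

lemma mult_mult_diff_eq:
  fixes V Q Q' C C' :: "'a::comm_ring_1 mat"
  assumes "V \<in> carrier_mat d d" "Q \<in> carrier_mat d d" "Q' \<in> carrier_mat d d"
    "C \<in> carrier_mat d d" "C' \<in> carrier_mat d d"
  shows "V * Q * C - V * Q' * C' = V * (Q * (C - C') + (Q - Q') * C')"
proof -
  have "Q * C - Q' * C' = Q * (C - C') + (Q - Q') * C'"
    using assms by (simp add: mult_minus_distrib_mat minus_mult_distrib_mat) (rule eq_matI, auto)
  moreover have "V * Q * C - V * Q' * C' = V * (Q * C) - V * (Q' * C')"
    using assms by (simp add: assoc_mult_mat[of _ d d _ d _ d])
  moreover have "\<dots> = V * (Q * C - Q' * C')"
    using assms by (intro mult_minus_distrib_mat[symmetric]) auto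
  ultimately show ?thesis by simp
qed

lemma circuit_hybrid:
  fixes N W :: nat
  defines "D \<equiv> qdim N W"
  assumes D: "0 < D" and U: "\<forall>t\<le>T. cunitary D (U t)"
    and O: "cunitary N O\<^sub>\<rho>" "cunitary N O\<^sub>\<rho>'" "cunitary N O\<^sub>\<sigma>" and \<delta>: "0 \<le> \<delta>"
    and close: "\<And>q X. X \<in> carrier_mat D D \<Longrightarrow>
      col0_norm D ((query_op N W q O\<^sub>\<rho> - query_op N W q O\<^sub>\<rho>') * X) \<le> \<delta> * col0_norm D X"
  shows "t \<le> T \<Longrightarrow>
    col0_norm D (circuit N W U sel kind O\<^sub>\<rho> O\<^sub>\<sigma> t - circuit N W U sel kind O\<^sub>\<rho>' O\<^sub>\<sigma> t) \<le> t * \<delta>"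
proof (induction t)
  case 0
  then have "U 0 \<in> carrier_mat D D" using U by (simp add: cunitary_def)
  then show ?case by (simp add: col0_norm_def L2_set_0')
next
  case (Suc t)
  let ?C = "circuit N W U sel kind O\<^sub>\<rho> O\<^sub>\<sigma> t" and ?C' = "circuit N W U sel kind O\<^sub>\<rho>' O\<^sub>\<sigma> t"
  define Q where "Q = query_op N W (kind t) (if sel t then O\<^sub>\<rho> else O\<^sub>\<sigma>)"
  define Q' where "Q' = query_op N W (kind t) (if sel t then O\<^sub>\<rho>' else O\<^sub>\<sigma>)"
  have C: "cunitary D ?C" "cunitary D ?C'"
    using Suc.prems U O unfolding D_def by (auto intro: circuit_unitary)
  have Q: "cunitary D Q" "cunitary D Q'"
    using O unfolding Q_def Q'_def D_def by (auto intro: query_op_unitary)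
  have V: "cunitary D (U (Suc t))" using Suc.prems U by simp
  have car: "U (Suc t) \<in> carrier_mat D D" "Q \<in> carrier_mat D D" "Q' \<in> carrier_mat D D"
    "?C \<in> carrier_mat D D" "?C' \<in> carrier_mat D D"
    using C Q V by (auto simp: cunitary_def)
  have split: "U (Suc t) * Q * ?C - U (Suc t) * Q' * ?C' = U (Suc t) * (Q * (?C - ?C') + (Q - Q') * ?C')"
    using car by (rule mult_mult_diff_eq)
  have step: "col0_norm D ((Q - Q') * ?C') \<le> \<delta>"
  proof (cases "sel t")
    case True
    then show ?thesis
      using close[of ?C' "kind t"] car col0_norm_circuit[of T N W U O\<^sub>\<rho>' O\<^sub>\<sigma> t sel kind] Suc.prems U O D
      unfolding Q_def Q'_def D_def by simp
  next
    case False
    then have "(Q - Q') * ?C' = 0\<^sub>m D D" using car unfolding Q_def Q'_def by simp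
    then show ?thesis using \<delta> by (simp add: col0_norm_def L2_set_0')
  qed
  have "col0_norm D (U (Suc t) * Q * ?C - U (Suc t) * Q' * ?C')
      = col0_norm D (Q * (?C - ?C') + (Q - Q') * ?C')"
    unfolding split using V car D by (intro col0_norm_unitary) auto
  also have "\<dots> \<le> col0_norm D (Q * (?C - ?C')) + col0_norm D ((Q - Q') * ?C')"
    using car D by (intro col0_norm_add_le[of _ D D]) auto
  also have "col0_norm D (Q * (?C - ?C')) = col0_norm D (?C - ?C')"
    using Q car D by (intro col0_norm_unitary) auto
  finally show ?case
    using Suc step unfolding Q_def Q'_def by (cases "sel t") (auto simp: algebra_simps)
qed

lemma L2_set_mono_set:
  assumes "S \<subseteq> T" "finite T"
  shows "L2_set f S \<le> L2_set f T"
  unfolding L2_set_def using assms by (intro real_sqrt_le_mono sum_mono2) auto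

lemma col0_norm_diff_ge_of_success:
  assumes C: "C \<in> carrier_mat D D" "C' \<in> carrier_mat D D" "0 < D" "col0_norm D C' = 1"
    and succ: "2/3 \<le> success_prob D C est v \<epsilon>" "2/3 \<le> success_prob D C' est v' \<epsilon>"
    and gap: "2 * \<epsilon> < \<bar>v - v'\<bar>"
  shows "1/5 \<le> col0_norm D (C - C')"
proof -
  define S where "S = {j. j < D \<and> \<bar>est j - v\<bar> \<le> \<epsilon>}"
  define S' where "S' = {j. j < D \<and> \<bar>est j - v'\<bar> \<le> \<epsilon>}"
  have S: "S \<subseteq> {..<D}" "S' \<subseteq> {..<D}" "S \<inter> S' = {}"
    unfolding S_def S'_def using gap by auto
  then have fin: "finite S" "finite S'" by (auto intro: finite_subset)
  have "(\<Sum>j\<in>S. (cmod (C' $$ (j, 0)))\<^sup>2) + (\<Sum>j\<in>S'. (cmod (C' $$ (j, 0)))\<^sup>2)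
      = (\<Sum>j\<in>S \<union> S'. (cmod (C' $$ (j, 0)))\<^sup>2)"
    using S fin by (simp add: sum.union_disjoint)
  also have "\<dots> \<le> (\<Sum>j<D. (cmod (C' $$ (j, 0)))\<^sup>2)"
    using S by (intro sum_mono2) auto
  also have "\<dots> = 1" using C(4) col0_norm_sq[of D C'] by simp
  finally have "(\<Sum>j\<in>S. (cmod (C' $$ (j, 0)))\<^sup>2) \<le> 1/3"
    using succ(2) unfolding success_prob_def S'_def by simp
  then have out: "L2_set (\<lambda>j. cmod (C' $$ (j, 0))) S \<le> 3/5"
    unfolding L2_set_def by (intro real_le_lsqrt) (auto simp: power_divide)
  have "4/5 \<le> L2_set (\<lambda>j. cmod (C $$ (j, 0))) S"
    using succ(1) unfolding L2_set_def success_prob_def S_def by (intro real_le_rsqrt) (auto simp: power_divide)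
  also have "\<dots> \<le> L2_set (\<lambda>j. cmod ((C - C') $$ (j, 0)) + cmod (C' $$ (j, 0))) S"
  proof (rule L2_set_mono)
    fix j assume "j \<in> S"
    then have "C $$ (j, 0) = (C - C') $$ (j, 0) + C' $$ (j, 0)" using S C by auto
    then show "cmod (C $$ (j, 0)) \<le> cmod ((C - C') $$ (j, 0)) + cmod (C' $$ (j, 0))"
      by (metis norm_triangle_ineq)
  qed simp
  also have "\<dots> \<le> L2_set (\<lambda>j. cmod ((C - C') $$ (j, 0))) S + L2_set (\<lambda>j. cmod (C' $$ (j, 0))) S"
    by (rule L2_set_triangle_ineq)
  also have "L2_set (\<lambda>j. cmod ((C - C') $$ (j, 0))) S \<le> col0_norm D (C - C')"
    unfolding col0_norm_def using S by (intro L2_set_mono_set) auto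
  finally show ?thesis using out by simp
qed

section \<open>Rotation oracles\<close>

text \<open>\<open>J4\<close> is a complex structure on \<open>\<real>\<^sup>4\<close> (\<open>J4\<^sup>T = -J4\<close>, \<open>J4\<^sup>2 = -1\<close>), so \<open>rot x y = x + y J4\<close>
  multiplies like \<open>x + iy\<close>. Its first column \<open>(x, 0, 0, y)\<close> purifies \<open>diag(x\<^sup>2, y\<^sup>2)\<close>.\<close>

definition J4 :: "nat \<Rightarrow> nat \<Rightarrow> real" where
  "J4 i j = (if (i = 3 \<and> j = 0) \<or> (i = 2 \<and> j = 1) then 1
             else if (i = 0 \<and> j = 3) \<or> (i = 1 \<and> j = 2) then -1 else 0)"

definition rot :: "real \<Rightarrow> real \<Rightarrow> complex mat" where
  "rot x y = mat 4 4 (\<lambda>(i, j). of_real ((if i = j then x else 0) + y * J4 i j))"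

lemma rot_carrier [simp]: "rot x y \<in> carrier_mat 4 4"
  and rot_dim [simp]: "dim_row (rot x y) = 4" "dim_col (rot x y) = 4"
  unfolding rot_def by auto

lemma less_4_cases: "(i::nat) < 4 \<longleftrightarrow> i = 0 \<or> i = 1 \<or> i = 2 \<or> i = 3"
  by auto

lemma rot_cadj: "cadj (rot x y) = rot x (- y)"
  by (rule eq_matI) (auto simp: rot_def J4_def less_4_cases)

lemma rot_mult: "rot x y * rot x' y' = rot (x * x' - y * y') (x * y' + y * x')"
proof (rule eq_matI)
  fix i j assume "i < dim_row (rot (x * x' - y * y') (x * y' + y * x'))"
    "j < dim_col (rot (x * x' - y * y') (x * y' + y * x'))"
  then have "i < 4" "j < 4" by auto
  then show "(rot x y * rot x' y') $$ (i, j) = rot (x * x' - y * y') (x * y' + y * x') $$ (i, j)"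
    by (subst index_mult_sum)
      (auto simp: lessThan_nat_numeral rot_def J4_def less_4_cases algebra_simps)
qed auto

lemma rot_minus: "rot x y - rot x' y' = rot (x - x') (y - y')"
  by (rule eq_matI) (auto simp: rot_def algebra_simps)

lemma rot_real: "rot x 0 = of_real x \<cdot>\<^sub>m 1\<^sub>m 4"
  by (rule eq_matI) (auto simp: rot_def)

lemma rot_one: "rot 1 0 = 1\<^sub>m 4"
  by (rule eq_matI) (auto simp: rot_def)

lemma rot_gram: "cadj (rot x y) * rot x y = rot (x\<^sup>2 + y\<^sup>2) 0"
  and rot_gram': "rot x y * cadj (rot x y) = rot (x\<^sup>2 + y\<^sup>2) 0"
  by (simp_all add: rot_cadj rot_mult power2_eq_square)

lemma rot_unitary: "x\<^sup>2 + y\<^sup>2 = 1 \<Longrightarrow> cunitary 4 (rot x y)"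
  unfolding cunitary_def by (simp add: rot_gram rot_gram' rot_one)

lemma query_op_rot:
  "query_op 4 W q (rot a b) =
     ctrl_pair 4 W (rot (if q \<le> 1 then a else 1) (if q = 0 then b else if q = 1 then - b else 0))
                   (rot a (if q = 0 \<or> q = 2 then b else - b))"
  unfolding query_op_def ext_op_ctrl_pair ctrl_op_ctrl_pair by (simp add: rot_cadj rot_one)

lemma ctrl_pair_rot_gram:
  "cadj (ctrl_pair 4 W (rot u0 v0) (rot u1 v1)) * ctrl_pair 4 W (rot u0 v0) (rot u1 v1) =
    cdiag (qdim 4 W) (\<lambda>r. if r div (4 * W) = 0 then u0\<^sup>2 + v0\<^sup>2 else u1\<^sup>2 + v1\<^sup>2)"
  by (simp add: ctrl_pair_cadj ctrl_pair_mult rot_gram, simp only: rot_real ctrl_pair_scalar)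

lemma query_op_rot_diff_le:
  assumes "X \<in> carrier_mat (qdim 4 W) (qdim 4 W)" "0 < W"
  shows "col0_norm (qdim 4 W) ((query_op 4 W q (rot a b) - query_op 4 W q (rot a' b')) * X)
    \<le> sqrt ((a - a')\<^sup>2 + (b - b')\<^sup>2) * col0_norm (qdim 4 W) X"
proof -
  have "query_op 4 W q (rot a b) - query_op 4 W q (rot a' b') =
      ctrl_pair 4 W (rot (if q \<le> 1 then a - a' else 0) (if q = 0 then b - b' else if q = 1 then b' - b else 0))
                    (rot (a - a') (if q = 0 \<or> q = 2 then b - b' else b' - b))"
    by (simp add: query_op_rot ctrl_pair_minus rot_minus)
  moreover have "(b' - b)\<^sup>2 = (b - b')\<^sup>2" by (simp add: power2_commute)
  ultimately show ?thesis
    using assms by (intro col0_norm_mult_le) (auto simp: ctrl_pair_rot_gram qdim_def)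
qed

lemma abs_sqrt_diff_le:
  assumes "1/4 \<le> p" "1/4 \<le> q"
  shows "\<bar>sqrt p - sqrt q\<bar> \<le> \<bar>p - q\<bar>"
proof -
  have quarter: "sqrt (1/4) = 1/2" by (simp add: real_sqrt_divide)
  have "1/2 \<le> sqrt p" "1/2 \<le> sqrt q"
    using real_sqrt_le_mono[OF assms(1)] real_sqrt_le_mono[OF assms(2)] by (simp_all only: quarter)
  then have "\<bar>sqrt p - sqrt q\<bar> * 1 \<le> \<bar>sqrt p - sqrt q\<bar> * (sqrt p + sqrt q)"
    by (intro mult_left_mono) auto
  also have "\<dots> = \<bar>(sqrt p - sqrt q) * (sqrt p + sqrt q)\<bar>"
    using \<open>1/2 \<le> sqrt p\<close> \<open>1/2 \<le> sqrt q\<close> by (simp add: abs_mult)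
  also have "\<dots> = \<bar>p - q\<bar>"
    using assms by (simp add: algebra_simps)
  finally show ?thesis by simp
qed

lemma rot_param_dist_le:
  assumes "1/4 \<le> p" "p \<le> 3/4" "1/4 \<le> q" "q \<le> 3/4"
  shows "sqrt ((sqrt q - sqrt p)\<^sup>2 + (sqrt (1 - q) - sqrt (1 - p))\<^sup>2) \<le> 2 * \<bar>q - p\<bar>"
proof -
  have "\<bar>sqrt q - sqrt p\<bar> \<le> \<bar>q - p\<bar>" "\<bar>sqrt (1 - q) - sqrt (1 - p)\<bar> \<le> \<bar>q - p\<bar>"
    using abs_sqrt_diff_le[of q p] abs_sqrt_diff_le[of "1 - q" "1 - p"] assms by auto
  then have "(sqrt q - sqrt p)\<^sup>2 \<le> (q - p)\<^sup>2" "(sqrt (1 - q) - sqrt (1 - p))\<^sup>2 \<le> (q - p)\<^sup>2"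
    by (simp_all add: abs_le_square_iff)
  then have "(sqrt q - sqrt p)\<^sup>2 + (sqrt (1 - q) - sqrt (1 - p))\<^sup>2 \<le> (2 * \<bar>q - p\<bar>)\<^sup>2"
    by (simp add: power_mult_distrib) (use zero_le_power2[of "q - p"] in linarith)
  then show ?thesis by (intro real_le_lsqrt) auto
qed

lemma circuit_rot_dist_le:
  fixes W :: nat
  assumes "0 < W" "\<forall>t\<le>T. cunitary (qdim 4 W) (U t)" "cunitary 4 O\<^sub>\<sigma>"
    and "1/4 \<le> p" "p \<le> 3/4" "1/4 \<le> q" "q \<le> 3/4"
  shows "col0_norm (qdim 4 W) (circuit 4 W U sel kind (rot (sqrt q) (sqrt (1 - q))) O\<^sub>\<sigma> T
      - circuit 4 W U sel kind (rot (sqrt p) (sqrt (1 - p))) O\<^sub>\<sigma> T) \<le> T * (2 * \<bar>q - p\<bar>)"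
proof -
  have "col0_norm (qdim 4 W) (circuit 4 W U sel kind (rot (sqrt q) (sqrt (1 - q))) O\<^sub>\<sigma> T
      - circuit 4 W U sel kind (rot (sqrt p) (sqrt (1 - p))) O\<^sub>\<sigma> T)
      \<le> T * sqrt ((sqrt q - sqrt p)\<^sup>2 + (sqrt (1 - q) - sqrt (1 - p))\<^sup>2)"
    using assms by (intro circuit_hybrid query_op_rot_diff_le) (auto simp: qdim_def rot_unitary)
  also have "\<dots> \<le> T * (2 * \<bar>q - p\<bar>)"
    using rot_param_dist_le assms by (intro mult_left_mono) auto
  finally show ?thesis .
qed

lemma cdiag_intertwine:
  assumes "U \<in> carrier_mat d d" "cdiag d mu * U = U * cdiag d lam"
  shows "cdiag d (\<lambda>i. f (mu i)) * U = U * cdiag d (\<lambda>i. f (lam i))"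
proof (rule eq_matI)
  fix r i assume "r < dim_row (U * cdiag d (\<lambda>i. f (lam i)))" "i < dim_col (U * cdiag d (\<lambda>i. f (lam i)))"
  then have ri: "r < d" "i < d" using assms(1) by auto
  have "(cdiag d mu * U) $$ (r, i) = (U * cdiag d lam) $$ (r, i)"
    by (simp only: assms(2))
  then have "of_real (mu r) * U $$ (r, i) = U $$ (r, i) * of_real (lam i)"
    by (simp only: cdiag_mult_index[OF assms(1) ri] mult_cdiag_index[OF assms(1) ri])
  then have "U $$ (r, i) = 0 \<or> mu r = lam i"
    by (metis mult.commute mult_cancel_left of_real_eq_iff)
  then show "(cdiag d (\<lambda>i. f (mu i)) * U) $$ (r, i) = (U * cdiag d (\<lambda>i. f (lam i))) $$ (r, i)"
    by (auto simp only: cdiag_mult_index[OF assms(1) ri] mult_cdiag_index[OF assms(1) ri]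
        mult.commute mult_zero_left)
qed (use assms in auto)

text \<open>Any diagonalising unitary intertwines the two diagonal matrices, so the description
  in \<open>mat_powr\<close> is unique even when eigenvalues repeat.\<close>

lemma mat_powr_cdiag:
  assumes "\<forall>i<d. 0 < mu i"
  shows "mat_powr d (cdiag d mu) t = cdiag d (\<lambda>i. mu i powr t)"
  unfolding mat_powr_def
proof (rule the_equality)
  show "\<exists>U lam. cunitary d U \<and> (\<forall>i<d. 0 < lam i) \<and> cdiag d mu = U * cdiag d lam * cadj U \<and>
      cdiag d (\<lambda>i. mu i powr t) = U * cdiag d (\<lambda>i. lam i powr t) * cadj U"
    using assms by (intro exI[of _ "1\<^sub>m d"] exI[of _ mu]) (simp add: cunitary_one)
next
  fix B assume "\<exists>U lam. cunitary d U \<and> (\<forall>i<d. 0 < lam i) \<and> cdiag d mu = U * cdiag d lam * cadj U \<and>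
      B = U * cdiag d (\<lambda>i. lam i powr t) * cadj U"
  then obtain U lam where "cunitary d U" and eq: "cdiag d mu = U * cdiag d lam * cadj U"
    and B: "B = U * cdiag d (\<lambda>i. lam i powr t) * cadj U" by blast
  then have U: "U \<in> carrier_mat d d" "cadj U \<in> carrier_mat d d" "cadj U * U = 1\<^sub>m d" "U * cadj U = 1\<^sub>m d"
    by (auto simp: cunitary_def)
  have carriers: "U * cdiag d lam \<in> carrier_mat d d" "cdiag d lam * cadj U \<in> carrier_mat d d"
    using U by auto
  have "cdiag d mu * U = U * cdiag d lam * (cadj U * U)"
    unfolding eq using U carriers by (simp add: assoc_mult_mat[of _ d d _ d _ d])
  then have "cdiag d mu * U = U * cdiag d lam" using U by simp
  then have "cdiag d (\<lambda>i. mu i powr t) * U = U * cdiag d (\<lambda>i. lam i powr t)"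
    by (rule cdiag_intertwine[OF U(1)])
  then have "B = cdiag d (\<lambda>i. mu i powr t) * U * cadj U"
    unfolding B by simp
  also have "\<dots> = cdiag d (\<lambda>i. mu i powr t) * (U * cadj U)"
    using U by (intro assoc_mult_mat) auto
  finally show "B = cdiag d (\<lambda>i. mu i powr t)" using U by simp
qed

lemma geo_mean_powr:
  fixes s r t :: real
  assumes "0 < s" "0 < r"
  shows "s powr (1/2) * (s powr (-1/2) * r * s powr (-1/2)) powr t * s powr (1/2) = s powr (1 - t) * r powr t"
proof -
  have "s powr (-1/2) * r * s powr (-1/2) = r / s"
    using assms by (simp add: powr_add[symmetric] mult.commute mult.left_commute)
  then have q: "(s powr (-1/2) * r * s powr (-1/2)) powr t = r powr t / s powr t"
    using assms by (simp add: powr_divide)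
  have "s powr (1/2) * (s powr (-1/2) * r * s powr (-1/2)) powr t * s powr (1/2)
      = s powr (1/2) * s powr (1/2) * (r powr t / s powr t)"
    unfolding q by (simp only: mult_ac)
  also have "\<dots> = s * r powr t / s powr t"
    using assms by (simp add: powr_add[symmetric])
  also have "\<dots> = s powr (1 - t) * r powr t"
    using assms by (simp add: powr_diff)
  finally show ?thesis .
qed

lemma mat_geo_cdiag:
  assumes "\<forall>i<d. 0 < s i" "\<forall>i<d. 0 < r i"
  shows "mat_geo d (cdiag d s) t (cdiag d r) = cdiag d (\<lambda>i. s i powr (1 - t) * r i powr t)"
proof -
  have "\<forall>i<d. 0 < s i powr (-1/2) * r i * s i powr (-1/2)"
    using assms by (auto intro!: mult_pos_pos)
  then have "mat_geo d (cdiag d s) t (cdiag d r) =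
      cdiag d (\<lambda>i. s i powr (1/2) * (s i powr (-1/2) * r i * s i powr (-1/2)) powr t * s i powr (1/2))"
    using assms unfolding mat_geo_def by (simp add: mat_powr_cdiag cdiag_mult)
  also have "\<dots> = cdiag d (\<lambda>i. s i powr (1 - t) * r i powr t)"
    using assms by (intro cdiag_cong geo_mean_powr) auto
  finally show ?thesis .
qed

lemma Fhat_cdiag:
  assumes "\<forall>i<d. 0 < r i" "\<forall>i<d. 0 < s i"
  shows "Fhat d \<alpha> (cdiag d r) (cdiag d s) = (\<Sum>i<d. s i powr (1 - \<alpha>) * r i powr \<alpha>)"
  using assms by (simp add: Fhat_def mat_geo_cdiag ctrace_cdiag)

section \<open>The hard instance\<close>

definition diag_qubit :: "real \<Rightarrow> complex mat" where
  "diag_qubit p = cdiag 2 (\<lambda>i. if i = 0 then p else 1 - p)"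

lemma less_2_cases: "(i::nat) < 2 \<longleftrightarrow> i = 0 \<or> i = 1"
  by auto

lemma rot_prepares_diag_qubit:
  assumes "0 \<le> p" "p \<le> 1"
  shows "prepares_purification 1 1 (rot (sqrt p) (sqrt (1 - p))) (diag_qubit p)"
  unfolding prepares_purification_def
proof
  show "cunitary (2 ^ (1 + 1)) (rot (sqrt p) (sqrt (1 - p)))"
    using assms by (simp add: rot_unitary)
  show "ptrace_anc_prep 1 1 (rot (sqrt p) (sqrt (1 - p))) = diag_qubit p"
    by (rule eq_matI)
      (use assms in \<open>auto simp: ptrace_anc_prep_def diag_qubit_def lessThan_nat_numeral rot_def J4_def
        less_2_cases power2_eq_square[symmetric] of_real_power[symmetric]\<close>)
qed

lemma diag_qubit_ge_quarter:
  assumes "1/4 \<le> p" "p \<le> 3/4"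
  shows "loewner_ge 2 (diag_qubit p) (of_real (1/4) \<cdot>\<^sub>m 1\<^sub>m 2)"
  unfolding diag_qubit_def using assms by (intro loewner_ge_cdiag) auto

definition fid_half :: "real \<Rightarrow> real \<Rightarrow> real" where
  "fid_half \<alpha> p = (1/2) powr (1 - \<alpha>) * (p powr \<alpha> + (1 - p) powr \<alpha>)"

lemma Fhat_diag_qubit_half:
  assumes "0 < p" "p < 1"
  shows "Fhat 2 \<alpha> (diag_qubit p) (diag_qubit (1/2)) = fid_half \<alpha> p"
proof -
  have "diag_qubit (1/2) = cdiag 2 (\<lambda>_. 1/2)"
    unfolding diag_qubit_def by (intro cdiag_cong) simp
  then show ?thesis
    using assms unfolding diag_qubit_def
    by (simp add: Fhat_cdiag less_2_cases lessThan_nat_numeral fid_half_def algebra_simps)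
qed

lemma fid_half_deriv:
  assumes "0 < x" "x < 1"
  shows "DERIV (fid_half \<alpha>) x :> (1/2) powr (1 - \<alpha>) * (\<alpha> * (x powr (\<alpha> - 1) - (1 - x) powr (\<alpha> - 1)))"
proof -
  have "DERIV (\<lambda>x. x powr \<alpha>) x :> \<alpha> * x powr (\<alpha> - 1)"
    using assms by (intro has_real_derivative_powr) simp
  moreover have "DERIV (\<lambda>x. (1 - x) powr \<alpha>) x :> \<alpha> * (1 - x) powr (\<alpha> - of_nat 1) * (0 - 1)"
    using assms by (intro DERIV_fun_powr DERIV_diff DERIV_const DERIV_ident) simp
  ultimately have "DERIV (fid_half \<alpha>) x :>
      (1/2) powr (1 - \<alpha>) * (\<alpha> * x powr (\<alpha> - 1) + \<alpha> * (1 - x) powr (\<alpha> - of_nat 1) * (0 - 1))"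
    unfolding fid_half_def[abs_def] by (intro DERIV_cmult DERIV_add)
  then show ?thesis by (simp add: algebra_simps)
qed

definition fid_half_slope :: "real \<Rightarrow> real" where
  "fid_half_slope \<alpha> = (1/2) powr (1 - \<alpha>) * (\<alpha> * ((1/3) powr (\<alpha> - 1) - (2/3) powr (\<alpha> - 1)))"

lemma fid_half_slope_pos: "0 < \<alpha> \<Longrightarrow> \<alpha> < 1 \<Longrightarrow> 0 < fid_half_slope \<alpha>"
  unfolding fid_half_slope_def by (simp add: powr_less_mono2_neg)

lemma fid_half_gap:
  assumes "0 < \<alpha>" "\<alpha> < 1" "0 < p" "p < q" "q \<le> 1/3"
  shows "fid_half_slope \<alpha> * (q - p) \<le> fid_half \<alpha> q - fid_half \<alpha> p"
proof -
  have der: "\<And>x. p \<le> x \<Longrightarrow> x \<le> q \<Longrightarrow> DERIV (fid_half \<alpha>) x :>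
      (1/2) powr (1 - \<alpha>) * (\<alpha> * (x powr (\<alpha> - 1) - (1 - x) powr (\<alpha> - 1)))"
    using assms by (intro fid_half_deriv) auto
  obtain z where z: "p < z" "z < q"
    and mvt: "fid_half \<alpha> q - fid_half \<alpha> p =
      (q - p) * ((1/2) powr (1 - \<alpha>) * (\<alpha> * (z powr (\<alpha> - 1) - (1 - z) powr (\<alpha> - 1))))"
    using MVT2[OF assms(4) der] by blast
  have "(1/3) powr (\<alpha> - 1) \<le> z powr (\<alpha> - 1)"
    using assms z by (intro powr_mono2') auto
  moreover have "(1 - z) powr (\<alpha> - 1) \<le> (2/3) powr (\<alpha> - 1)"
    using assms z by (intro powr_mono2') auto
  ultimately have "fid_half_slope \<alpha> \<le> (1/2) powr (1 - \<alpha>) * (\<alpha> * (z powr (\<alpha> - 1) - (1 - z) powr (\<alpha> - 1)))"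
    unfolding fid_half_slope_def using assms by (intro mult_left_mono) auto
  then show ?thesis
    unfolding mvt using assms by (simp add: mult.commute mult_left_mono)
qed

lemma query_lower_bound:
  fixes W :: nat
  defines "D \<equiv> qdim 4 W"
  assumes \<alpha>: "0 < \<alpha>" "\<alpha> < 1" and \<epsilon>: "0 < \<epsilon>" "\<epsilon> < fid_half_slope \<alpha> / 36"
    and W: "0 < W" and U: "\<forall>t\<le>T. cunitary D (U t)"
    and correct: "\<And>\<rho> \<sigma> O\<^sub>\<rho> O\<^sub>\<sigma>.
      loewner_ge 2 \<rho> (of_real (1/4) \<cdot>\<^sub>m 1\<^sub>m 2) \<Longrightarrow> loewner_ge 2 \<sigma> (of_real (1/4) \<cdot>\<^sub>m 1\<^sub>m 2) \<Longrightarrow>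
      prepares_purification 1 1 O\<^sub>\<rho> \<rho> \<Longrightarrow> prepares_purification 1 1 O\<^sub>\<sigma> \<sigma> \<Longrightarrow>
      2/3 \<le> success_prob D (circuit 4 W U sel kind O\<^sub>\<rho> O\<^sub>\<sigma> T) est (Fhat 2 \<alpha> \<rho> \<sigma>) \<epsilon>"
  shows "fid_half_slope \<alpha> / 30 / \<epsilon> \<le> real T"
proof -
  define L where "L = fid_half_slope \<alpha>"
  have L: "0 < L" unfolding L_def using \<alpha> by (rule fid_half_slope_pos)
  define h where "h = 3 * \<epsilon> / L"
  have h: "0 < h" "h < 1/12" unfolding h_def using \<epsilon> L by (auto simp: L_def field_simps)
  define p :: real where "p = 1/4"
  define q where "q = p + h"
  have pq: "1/4 \<le> p" "p < q" "q \<le> 1/3" unfolding p_def q_def using h by auto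
  define C where
    "C r = circuit 4 W U sel kind (rot (sqrt r) (sqrt (1 - r))) (rot (sqrt (1/2)) (sqrt (1/2))) T" for r
  have D: "0 < D" unfolding D_def qdim_def using W by simp
  have O\<^sub>\<sigma>: "cunitary 4 (rot (sqrt (1/2)) (sqrt (1/2)))" by (simp add: rot_unitary)
  have C: "C r \<in> carrier_mat D D" "col0_norm D (C r) = 1" if "0 \<le> r" "r \<le> 1" for r
  proof -
    have "cunitary 4 (rot (sqrt r) (sqrt (1 - r)))" using that by (simp add: rot_unitary)
    then show "C r \<in> carrier_mat D D" "col0_norm D (C r) = 1"
      using circuit_unitary[OF U[unfolded D_def] _ O\<^sub>\<sigma>] col0_norm_circuit[OF U[unfolded D_def] _ O\<^sub>\<sigma>] D
      unfolding C_def D_def by (auto simp: cunitary_def)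
  qed
  have success: "2/3 \<le> success_prob D (C r) est (fid_half \<alpha> r) \<epsilon>" if "1/4 \<le> r" "r \<le> 3/4" for r
    using correct[OF diag_qubit_ge_quarter[of r] diag_qubit_ge_quarter[of "1/2"]
        rot_prepares_diag_qubit[of r] rot_prepares_diag_qubit[of "1/2"]] that Fhat_diag_qubit_half[of r \<alpha>]
    unfolding C_def by simp
  have "3 * \<epsilon> \<le> fid_half \<alpha> q - fid_half \<alpha> p"
    using fid_half_gap[OF \<alpha>, of p q] pq L unfolding h_def q_def L_def by simp
  then have "1/5 \<le> col0_norm D (C q - C p)"
    using pq \<epsilon> by (intro col0_norm_diff_ge_of_success[OF C(1) C(1) D C(2) success success]) auto
  also have "\<dots> \<le> T * (2 * h)"
    using circuit_rot_dist_le[OF W U[unfolded D_def] O\<^sub>\<sigma>, of p q] pq h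
    unfolding C_def D_def q_def by simp
  finally have "1/5 \<le> T * (6 * \<epsilon> / L)" unfolding h_def by simp
  then show ?thesis using L \<epsilon> unfolding L_def by (simp add: field_simps)
qed

theorem mainTheorem13:
  fixes \<alpha> :: real
  assumes "0 < \<alpha>" and "\<alpha> < 1"
  shows "\<exists>(\<kappa>0::real) c\<^sub>\<alpha> \<epsilon>\<^sub>\<alpha> (n::nat) (a::nat). \<kappa>0 \<ge> 1 \<and> c\<^sub>\<alpha> > 0 \<and> \<epsilon>\<^sub>\<alpha> > 0 \<and>
     (\<forall>\<epsilon>. 0 < \<epsilon> \<and> \<epsilon> < \<epsilon>\<^sub>\<alpha> \<longrightarrow>
       (\<forall>(w::nat) (T::nat) (U :: nat \<Rightarrow> complex mat) (sel :: nat \<Rightarrow> bool) (kind :: nat \<Rightarrow> nat)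
           (est :: nat \<Rightarrow> real).
          let N = 2^(n+a); W = 2^w; D = qdim N W in
          (\<forall>t\<le>T. cunitary D (U t)) \<and>
          (\<forall>\<rho> \<sigma> O\<^sub>\<rho> O\<^sub>\<sigma>.
              loewner_ge (2^n) \<rho> (complex_of_real (1/\<kappa>0) \<cdot>\<^sub>m 1\<^sub>m (2^n)) \<and>
              loewner_ge (2^n) \<sigma> (complex_of_real (1/\<kappa>0) \<cdot>\<^sub>m 1\<^sub>m (2^n)) \<and>
              prepares_purification n a O\<^sub>\<rho> \<rho> \<and> prepares_purification n a O\<^sub>\<sigma> \<sigma> \<longrightarrow>
              success_prob D (circuit N W U sel kind O\<^sub>\<rho> O\<^sub>\<sigma> T) est (Fhat (2^n) \<alpha> \<rho> \<sigma>) \<epsilon> \<ge> 2/3)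
          \<longrightarrow> real T \<ge> c\<^sub>\<alpha> / \<epsilon>))"
proof -
  have L: "0 < fid_half_slope \<alpha>" using assms by (rule fid_half_slope_pos)
  have bound: "real T \<ge> fid_half_slope \<alpha> / 30 / \<epsilon>"
    if "0 < \<epsilon>" "\<epsilon> < fid_half_slope \<alpha> / 36" "\<forall>t\<le>T. cunitary (qdim 4 (2^w)) (U t)"
      and "\<forall>\<rho> \<sigma> O\<^sub>\<rho> O\<^sub>\<sigma>. loewner_ge 2 \<rho> (of_real (1/4) \<cdot>\<^sub>m 1\<^sub>m 2) \<and> loewner_ge 2 \<sigma> (of_real (1/4) \<cdot>\<^sub>m 1\<^sub>m 2) \<and>
        prepares_purification 1 1 O\<^sub>\<rho> \<rho> \<and> prepares_purification 1 1 O\<^sub>\<sigma> \<sigma> \<longrightarrow>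
        2/3 \<le> success_prob (qdim 4 (2^w)) (circuit 4 (2^w) U sel kind O\<^sub>\<rho> O\<^sub>\<sigma> T) est (Fhat 2 \<alpha> \<rho> \<sigma>) \<epsilon>"
    for \<epsilon> w T U sel kind est
    using that assms by (intro query_lower_bound[where sel=sel and kind=kind and est=est]) auto
  show ?thesis
    by (rule exI[of _ "4::real"], rule exI[of _ "fid_half_slope \<alpha> / 30"],
        rule exI[of _ "fid_half_slope \<alpha> / 36"], rule exI[of _ "1::nat"], rule exI[of _ "1::nat"])
      (use L bound in \<open>simp add: Let_def, blast\<close>)
qed

end
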